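(* Assume (A1)–(A5) hold, and let $\{u_k\}_{k\ge0}$ be the exact-data iteration defined below. Then $u_k\in\mathcal B_\wp(u^\dagger)$ for all $k\ge0$, and $$\|u_{k+1}-u^\dagger\|^2-\|u_k-u^\dagger\|^2\le-2\mathcal C_0\|\mathcal F(u_k)-v\|^2\qquad\text{for all }k\ge0,$$ where $\mathcal C_0:=(1-\eta)\zeta-\nu_0(\wp+\nu_1)-\zeta_0^2>0$. Consequently $\{\|u_k-u^\dagger\|\}_{k\ge0}$ is monotonically decreasing, and $$\sum_{k=0}^\infty\|\mathcal F(u_k)-v\|^2\le\frac1{2\mathcal C_0}\|u_0-u^\dagger\|^2<\infty .$$
   Context: Spaces and operator. Let $\mathcal U=\mathbb R^N$ and $\mathcal V=\mathbb R^M$ carry the Euclidean inner product and norm. Let $\mathcal F:\mathcal D(\mathcal F)\subset\mathcal U\to\mathcal V$ be a (possibly nonlinear) operator, let $v\in\mathcal V$ be exact data, and let $\mathcal B_r(x)$ denote the closed ball of radius $r$ centred at $x$. Images and graph Laplacian. Elements of $\mathcal U$ are images on a pixel grid $\mathcal S=\{1,\dots,p\}\times\{1,\dots,q\}$ with $N=pq$. Fix $R\in(0,\infty)$, $\lambda>0$ and a metric $d$ on $\mathcal S$. For $u\in\mathcal U$, define $$(W_u)_{ab}=\mathbf 1_{(0,R]}(d(a,b))\exp(-|u(a)-u(b)|^2/\lambda),$$ let $D_u$ be the diagonal matrix of row sums of $W_u$, and set $\Delta_u=D_u-W_u$. Exact-data iteration. Let $\Psi:\mathcal V\to\mathcal U$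 be a reconstruction map and set $u_0=\Psi(v)$. Define $$u_{k+1}=u_k-\alpha_k\mathcal F'(u_k)^*\big(\mathcal F(u_k)-v\big)-\beta_k\Delta_{u_k}u_k,$$ with $$\alpha_k=\min\Big\{\frac{\zeta_0\|\mathcal F(u_k)-v\|}{\|\mathcal F'(u_k)^*(\mathcal F(u_k)-v)\|},\zeta_1\Big\}.$$ If $\|\Delta_{u_k}u_k\|\ne0$, then $$\beta_k=\min\Big\{\frac{\nu_0\|\mathcal F(u_k)-v\|^2}{\|\Delta_{u_k}u_k\|},\frac{\nu_1}{\|\Delta_{u_k}u_k\|},\nu_2\Big\},$$ and otherwise $\beta_k=0$. Here $\zeta_0,\zeta_1,\nu_0,\nu_1,\nu_2>0$ are constants, and $\zeta>0$ is a constant with $\zeta\le\alpha_k$ for all $k$. Operator assumptions. There exist $\wp>0$, $B>0$, $\eta\in[0,1)$ and $L\ge0$ such that for all $u,w\in\mathcal B_{3\wp}(u_0)\subset\mathcal D(\mathcal F)$: - (A1) $\mathcal F$ is Fréchet differentiable with $u\mapsto\mathcal F'(u)$ continuous; - (A2) $\|\mathcal F'(u)\|\le B$; - (A3) $\|\mathcal F(u)-\mathcal F(w)-\mathcal F'(w)(u-w)\|\le\eta\|\mathcal F(u)-\mathcal F(w)\|$; - (A4) $\|\mathcal F'(u)-\mathcal F'(w)\|\le L\|u-w\|$; - (A5) there exists $u^\dagger\in\mathcal B_\wp(u_0)$ with $\mathcal F(u^\dagger)=v$. Standing parameter condition. Fix $\mathcal H>\frac{1+\eta}{1-\eta}$.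 The constant $\zeta$ is assumed to satisfy $$\zeta>\frac{\nu_0(\wp+\nu_1)+\zeta_0^2}{1-\eta-\frac{1+\eta}{\mathcal H}} .$$ *)

theory Defs
  imports "HOL-Analysis.Analysis"
begin

text \<open>Images on the pixel grid {1..p} x {1..q} are modelled as vectors indexed by
  the finite product type 'p \<times> 'q; an image is u :: real^('p \<times> 'q).\<close>

definition is_metric_on_pixels :: "('a \<Rightarrow> 'a \<Rightarrow> real) \<Rightarrow> bool" where
  "is_metric_on_pixels d \<longleftrightarrow>
     (\<forall>a b. 0 \<le> d a b) \<and> (\<forall>a b. d a b = 0 \<longleftrightarrow> a = b) \<and>
     (\<forall>a b. d a b = d b a) \<and> (\<forall>a b c. d a c \<le> d a b + d b c)"

definition graph_weight ::
  "('a::finite \<Rightarrow> 'a \<Rightarrow> real) \<Rightarrow> real \<Rightarrow> real \<Rightarrow> real^'a \<Rightarrow> real^'a^'a" where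
  "graph_weight d R lam u =
     (\<chi> a b. (if 0 < d a b \<and> d a b \<le> R then 1 else 0) * exp (- (\<bar>u $ a - u $ b\<bar>)\<^sup>2 / lam))"

definition graph_degree ::
  "('a::finite \<Rightarrow> 'a \<Rightarrow> real) \<Rightarrow> real \<Rightarrow> real \<Rightarrow> real^'a \<Rightarrow> real^'a^'a" where
  "graph_degree d R lam u =
     (\<chi> a b. if a = b then (\<Sum>c\<in>UNIV. graph_weight d R lam u $ a $ c) else 0)"

definition graph_laplacian ::
  "('a::finite \<Rightarrow> 'a \<Rightarrow> real) \<Rightarrow> real \<Rightarrow> real \<Rightarrow> real^'a \<Rightarrow> real^'a^'a" where
  "graph_laplacian d R lam u = graph_degree d R lam u - graph_weight d R lam u"

end

theory Submission
  imports Defs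
begin

text \<open>Write \<open>r\<^sub>k = F(u\<^sub>k) - v\<close> and \<open>e\<^sub>k = u\<^sub>k - u\<^sup>\<dagger>\<close>. Since \<open>F(u\<^sup>\<dagger>) = v\<close>, the tangential cone
  condition (A3) says \<open>\<parallel>F'(u\<^sub>k) e\<^sub>k - r\<^sub>k\<parallel> \<le> \<eta> \<parallel>r\<^sub>k\<parallel>\<close>, hence
  \<open>\<langle>e\<^sub>k, F'(u\<^sub>k)\<^sup>* r\<^sub>k\<rangle> \<ge> (1 - \<eta>) \<parallel>r\<^sub>k\<parallel>\<^sup>2\<close>. The step sizes are chosen so that the data step has
  length at most \<open>\<zeta>\<^sub>0 \<parallel>r\<^sub>k\<parallel>\<close> and the Laplacian step length at most \<open>min(\<nu>\<^sub>0 \<parallel>r\<^sub>k\<parallel>\<^sup>2, \<nu>\<^sub>1)\<close>.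
  Expanding \<open>\<parallel>e\<^sub>k - step\<parallel>\<^sup>2\<close> and using \<open>\<parallel>e\<^sub>k\<parallel> \<le> \<wp>\<close> for the Laplacian cross term gives a decrease
  by \<open>2 C\<^sub>0 \<parallel>r\<^sub>k\<parallel>\<^sup>2\<close>, so \<open>\<parallel>e\<^sub>k\<parallel>\<close> decreases and \<open>u\<^sub>k\<close> never leaves \<open>B\<^sub>\<wp>(u\<^sup>\<dagger>)\<close>, where (A3)
  applies; telescoping bounds the residual series.\<close>

lemma descent_constant_pos:
  fixes eta H X zeta :: real
  assumes "0 \<le> eta" "eta < 1" "(1 + eta) / (1 - eta) < H" "0 \<le> X"
    and "X / (1 - eta - (1 + eta) / H) < zeta"
  shows "0 < (1 - eta) * zeta - X"
proof -
  have "0 \<le> (1 + eta) / (1 - eta)"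
    using assms(1,2) by simp
  then have H_pos: "0 < H"
    using assms(3) by linarith
  have "1 + eta < H * (1 - eta)"
    using assms(2,3) by (simp add: divide_less_eq mult.commute)
  then have "0 < 1 - eta - (1 + eta) / H"
    using H_pos by (simp add: divide_less_eq mult.commute)
  moreover have "1 - eta - (1 + eta) / H \<le> 1 - eta"
    using H_pos assms(1) by simp
  ultimately have "X / (1 - eta) \<le> X / (1 - eta - (1 + eta) / H)"
    using assms(4) by (intro divide_left_mono) auto
  then have "X / (1 - eta) < zeta"
    using assms(5) by linarith
  then have "X < zeta * (1 - eta)"
    using assms(2) by (simp add: divide_less_eq)
  then show ?thesis
    by (simp add: algebra_simps)
qed

lemma min_divide_mult_le:
  fixes x s y :: real
  assumes "0 \<le> x" "0 \<le> s"
  shows "min (x / s) y * s \<le> x"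
proof (cases "s = 0")
  case False
  then have "min (x / s) y * s \<le> x / s * s"
    using assms(2) by (intro mult_right_mono) auto
  with False show ?thesis by simp
qed (use assms in simp)

lemma inner_adjoint_ge_of_tangential_cone:
  fixes A :: "'a::euclidean_space \<Rightarrow> 'b::euclidean_space"
  assumes "linear A" and "norm (A e - r) \<le> eta * norm r"
  shows "(1 - eta) * (norm r)\<^sup>2 \<le> e \<bullet> adjoint A r"
proof -
  have "e \<bullet> adjoint A r = (norm r)\<^sup>2 + (A e - r) \<bullet> r"
    by (simp add: adjoint_works[OF assms(1)] inner_diff_left power2_norm_eq_inner)
  moreover have "- ((A e - r) \<bullet> r) \<le> eta * (norm r)\<^sup>2"
  proof -
    have "- ((A e - r) \<bullet> r) \<le> norm (A e - r) * norm r"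
      using Cauchy_Schwarz_ineq2[of "A e - r" r] by linarith
    also have "\<dots> \<le> eta * norm r * norm r"
      using assms(2) by (simp add: mult_right_mono)
    finally show ?thesis by (simp add: power2_eq_square mult.assoc)
  qed
  ultimately show ?thesis
    by (simp add: algebra_simps)
qed

lemma norm_sq_descent_step:
  fixes e g D :: "'a::real_inner"
  assumes alpha: "zeta \<le> alpha" "0 < zeta" "alpha * norm g \<le> zeta0 * rho"
    and beta: "0 \<le> beta" "beta * norm D \<le> nu0 * rho\<^sup>2" "beta * norm D \<le> nu1"
    and e: "norm e \<le> wp" "(1 - eta) * rho\<^sup>2 \<le> e \<bullet> g"
    and "eta < 1"
  shows "(norm (e - alpha *\<^sub>R g - beta *\<^sub>R D))\<^sup>2 - (norm e)\<^sup>2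
         \<le> - 2 * ((1 - eta) * zeta - nu0 * (wp + nu1) - zeta0\<^sup>2) * rho\<^sup>2"
proof -
  define a b where "a = alpha * norm g" and "b = beta * norm D"
  have a_b_nonneg: "0 \<le> a" "0 \<le> b"
    using alpha beta unfolding a_def b_def by simp_all
  have expand: "(norm (e - alpha *\<^sub>R g - beta *\<^sub>R D))\<^sup>2
      = (norm e)\<^sup>2 - 2 * alpha * (e \<bullet> g) - 2 * beta * (e \<bullet> D) + (norm (alpha *\<^sub>R g + beta *\<^sub>R D))\<^sup>2"
    by (simp add: power2_norm_eq_inner inner_commute algebra_simps)
  have "(norm (alpha *\<^sub>R g + beta *\<^sub>R D))\<^sup>2 \<le> (a + b)\<^sup>2"
    using norm_triangle_ineq[of "alpha *\<^sub>R g" "beta *\<^sub>R D"] alpha beta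
    unfolding a_def b_def by (intro power_mono) auto
  also have "\<dots> \<le> 2 * a\<^sup>2 + 2 * b\<^sup>2"
    using zero_le_power2[of "a - b"] by (simp add: power2_diff power2_sum)
  also have "\<dots> \<le> 2 * (zeta0\<^sup>2 * rho\<^sup>2) + 2 * (nu1 * (nu0 * rho\<^sup>2))"
  proof -
    have "a\<^sup>2 \<le> (zeta0 * rho)\<^sup>2"
      using alpha a_b_nonneg unfolding a_def by (intro power_mono) auto
    moreover have "b * b \<le> nu1 * (nu0 * rho\<^sup>2)"
      using beta(2,3) a_b_nonneg(2) unfolding b_def[symmetric] by (intro mult_mono) auto
    ultimately show ?thesis
      by (simp add: power_mult_distrib power2_eq_square algebra_simps)
  qed
  finally have step_sq: "(norm (alpha *\<^sub>R g + beta *\<^sub>R D))\<^sup>2 \<le> 2 * zeta0\<^sup>2 * rho\<^sup>2 + 2 * nu1 * nu0 * rho\<^sup>2"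
    by simp
  have "- (e \<bullet> D) \<le> norm e * norm D"
    using Cauchy_Schwarz_ineq2[of e D] by (simp add: abs_le_iff)
  then have "beta * - (e \<bullet> D) \<le> beta * (norm e * norm D)"
    using beta(1) by (rule mult_left_mono)
  then have "- (beta * (e \<bullet> D)) \<le> norm e * b"
    unfolding b_def by (simp add: algebra_simps)
  also have "\<dots> \<le> wp * (nu0 * rho\<^sup>2)"
    using e(1) beta(2) a_b_nonneg(2) order.trans[OF norm_ge_zero e(1)] unfolding b_def[symmetric]
    by (intro mult_mono) auto
  finally have laplacian_term: "- (beta * (e \<bullet> D)) \<le> wp * nu0 * rho\<^sup>2"
    by simp
  have "zeta * ((1 - eta) * rho\<^sup>2) \<le> alpha * ((1 - eta) * rho\<^sup>2)"
    using alpha \<open>eta < 1\<close> by (intro mult_right_mono) auto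
  also have "\<dots> \<le> alpha * (e \<bullet> g)"
    using e(2) alpha by (intro mult_left_mono) auto
  finally have data_term: "zeta * ((1 - eta) * rho\<^sup>2) \<le> alpha * (e \<bullet> g)" .
  show ?thesis
    using expand step_sq laplacian_term data_term by (simp add: algebra_simps)
qed

lemma min_min_divide_mult_bounds:
  fixes a b c s :: real
  assumes "0 \<le> a" "0 \<le> b" "0 \<le> c" "0 \<le> s"
    and beta: "beta = (if s \<noteq> 0 then min (min (a / s) (b / s)) c else 0)"
  shows "0 \<le> beta" "beta * s \<le> a" "beta * s \<le> b"
proof -
  show "0 \<le> beta"
    unfolding beta using assms(1-4) by simp
  show "beta * s \<le> a"
    unfolding beta using min_divide_mult_le[of a s "min (b / s) c"] assms(1,4)
    by (simp add: min.assoc)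
  show "beta * s \<le> b"
    unfolding beta using min_divide_mult_le[of b s "min (a / s) c"] assms(2,4)
    by (simp add: min.assoc min.left_commute)
qed

lemma regularized_landweber_step:
  fixes F :: "'a::euclidean_space \<Rightarrow> 'b::euclidean_space"
  assumes "linear A"
    and tangential_cone: "norm (F y - F x - A (y - x)) \<le> eta * norm (F y - F x)"
    and "F y = v" "norm (x - y) \<le> wp"
    and alpha: "zeta \<le> alpha" "0 < zeta"
      "alpha * norm (adjoint A (F x - v)) \<le> zeta0 * norm (F x - v)"
    and beta: "0 \<le> beta" "beta * norm D \<le> nu0 * (norm (F x - v))\<^sup>2" "beta * norm D \<le> nu1"
    and "eta < 1"
  shows "(norm (x - alpha *\<^sub>R adjoint A (F x - v) - beta *\<^sub>R D - y))\<^sup>2 - (norm (x - y))\<^sup>2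
         \<le> - 2 * ((1 - eta) * zeta - nu0 * (wp + nu1) - zeta0\<^sup>2) * (norm (F x - v))\<^sup>2"
proof -
  have "A (y - x) = - A (x - y)"
    using linear_neg[OF \<open>linear A\<close>, of "x - y"] by simp
  then have "F y - F x - A (y - x) = A (x - y) - (F x - v)"
    using \<open>F y = v\<close> by simp
  moreover have "norm (F y - F x) = norm (F x - v)"
    using \<open>F y = v\<close> by (simp add: norm_minus_commute)
  ultimately have "norm (A (x - y) - (F x - v)) \<le> eta * norm (F x - v)"
    using tangential_cone by metis
  then have "(1 - eta) * (norm (F x - v))\<^sup>2 \<le> (x - y) \<bullet> adjoint A (F x - v)"
    by (rule inner_adjoint_ge_of_tangential_cone[OF \<open>linear A\<close>])
  from norm_sq_descent_step[OF alpha beta \<open>norm (x - y) \<le> wp\<close> this \<open>eta < 1\<close>]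
  show ?thesis
    by (simp add: algebra_simps)
qed

lemma regularized_landweber_step_size_rule:
  fixes F :: "'a::euclidean_space \<Rightarrow> 'b::euclidean_space"
  assumes "linear A"
    and "norm (F y - F x - A (y - x)) \<le> eta * norm (F y - F x)"
    and "F y = v" "norm (x - y) \<le> wp" "eta < 1"
    and alpha: "alpha = min (zeta0 * norm (F x - v) / norm (adjoint A (F x - v))) zeta1"
      "zeta \<le> alpha" "0 < zeta" "0 \<le> zeta0"
    and beta: "beta = (if norm D \<noteq> 0
        then min (min (nu0 * (norm (F x - v))\<^sup>2 / norm D) (nu1 / norm D)) nu2 else 0)"
      "0 \<le> nu0" "0 \<le> nu1" "0 \<le> nu2"
  shows "(norm (x - alpha *\<^sub>R adjoint A (F x - v) - beta *\<^sub>R D - y))\<^sup>2 - (norm (x - y))\<^sup>2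
         \<le> - 2 * ((1 - eta) * zeta - nu0 * (wp + nu1) - zeta0\<^sup>2) * (norm (F x - v))\<^sup>2"
proof -
  have "alpha * norm (adjoint A (F x - v)) \<le> zeta0 * norm (F x - v)"
    unfolding alpha(1) using alpha(4) by (intro min_divide_mult_le) simp_all
  moreover note min_min_divide_mult_bounds[OF _ _ beta(4) norm_ge_zero beta(1)]
  ultimately show ?thesis
    using beta(2,3) by (intro regularized_landweber_step[OF assms(1-4) alpha(2,3)]) (simp_all add: assms(5))
qed

lemma bounded_decseq_of_sq_decrease:
  fixes e :: "nat \<Rightarrow> real"
  assumes decrease: "\<And>k. e k \<le> \<rho> \<Longrightarrow> (e (Suc k))\<^sup>2 \<le> (e k)\<^sup>2"
    and "\<And>k. 0 \<le> e k" "e 0 \<le> \<rho>"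
  shows "e k \<le> \<rho>" and "decseq e"
proof -
  have Suc_le: "e (Suc k) \<le> e k" if "e k \<le> \<rho>" for k
    using power2_le_imp_le[OF decrease[OF that] assms(2)] .
  have bounded: "e k \<le> \<rho>" for k
  proof (induction k)
    case (Suc k)
    then show ?case
      using Suc_le[OF Suc] by linarith
  qed (rule \<open>e 0 \<le> \<rho>\<close>)
  then show "e k \<le> \<rho>" .
  show "decseq e"
    unfolding decseq_Suc_iff using Suc_le bounded by blast
qed

lemma summable_of_telescoping_descent:
  fixes a b :: "nat \<Rightarrow> real"
  assumes step: "\<And>k. a (Suc k) \<le> a k - c * b k"
    and "\<And>k. 0 \<le> a k" "\<And>k. 0 \<le> b k" "0 < c"
  shows "summable b" and "suminf b \<le> a 0 / c"
proof -
  have partial: "c * (\<Sum>k<n. b k) \<le> a 0 - a n" for n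
  proof (induction n)
    case (Suc n)
    then show ?case
      using step[of n] by (simp add: distrib_left)
  qed simp
  have bound: "(\<Sum>k<n. b k) \<le> a 0 / c" for n
    using partial[of n] assms(2)[of n] \<open>0 < c\<close> by (simp add: le_divide_eq mult.commute)
  show "summable b"
    using bound[of "Suc _"] assms(3) by (intro bounded_imp_summable) (auto simp: lessThan_Suc_atMost)
  then show "suminf b \<le> a 0 / c"
    using bound by (rule suminf_le_const)
qed

lemma fejer_descent_bounded_summable:
  fixes e r :: "nat \<Rightarrow> real"
  assumes descent: "\<And>k. e k \<le> \<rho> \<Longrightarrow> (e (Suc k))\<^sup>2 - (e k)\<^sup>2 \<le> - 2 * c * (r k)\<^sup>2"
    and "0 < c" "\<And>k. 0 \<le> e k" "e 0 \<le> \<rho>"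
  shows "\<forall>k. e k \<le> \<rho>" "decseq e" "summable (\<lambda>k. (r k)\<^sup>2)" "(\<Sum>k. (r k)\<^sup>2) \<le> (e 0)\<^sup>2 / (2 * c)"
proof -
  have "(e (Suc k))\<^sup>2 \<le> (e k)\<^sup>2" if "e k \<le> \<rho>" for k
  proof -
    have "0 \<le> c * (r k)\<^sup>2"
      using \<open>0 < c\<close> by simp
    then show ?thesis
      using descent[OF that] by linarith
  qed
  note bounded = bounded_decseq_of_sq_decrease[OF this assms(3,4)]
  then show "\<forall>k. e k \<le> \<rho>" "decseq e"
    by auto
  have "(e (Suc k))\<^sup>2 \<le> (e k)\<^sup>2 - 2 * c * (r k)\<^sup>2" for k
    using descent[OF bounded(1)[of k]] by linarith
  from summable_of_telescoping_descent[where a = "\<lambda>k. (e k)\<^sup>2", OF this] \<open>0 < c\<close>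
  show "summable (\<lambda>k. (r k)\<^sup>2)" "(\<Sum>k. (r k)\<^sup>2) \<le> (e 0)\<^sup>2 / (2 * c)"
    by simp_all
qed

theorem mainTheorem3:
  fixes F :: "real^('p::finite \<times> 'q::finite) \<Rightarrow> real^'m::finite"
    and F' :: "real^('p \<times> 'q) \<Rightarrow> (real^('p \<times> 'q) \<Rightarrow> real^'m)"
    and Dom :: "(real^('p \<times> 'q)) set"
    and v :: "real^'m"
    and d :: "'p \<times> 'q \<Rightarrow> 'p \<times> 'q \<Rightarrow> real"
    and R lam :: real
    and Psi :: "real^'m \<Rightarrow> real^('p \<times> 'q)"
    and u :: "nat \<Rightarrow> real^('p \<times> 'q)"
    and alpha beta :: "nat \<Rightarrow> real"
    and zeta0 zeta1 nu0 nu1 nu2 zeta :: real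
    and wp B eta L H :: real
    and udag :: "real^('p \<times> 'q)"
  assumes R_pos: "0 < R" and lam_pos: "0 < lam"
    and d_metric: "is_metric_on_pixels d"
    and consts_pos: "0 < zeta0" "0 < zeta1" "0 < nu0" "0 < nu1" "0 < nu2" "0 < zeta"
    and wp_pos: "0 < wp" and B_pos: "0 < B" and eta: "0 \<le> eta" "eta < 1" and L_nonneg: "0 \<le> L"
    and u0: "u 0 = Psi v"
    and alpha_def: "\<And>k. alpha k = min (zeta0 * norm (F (u k) - v)
                          / norm (adjoint (F' (u k)) (F (u k) - v))) zeta1"
    and beta_def: "\<And>k. beta k =
          (if norm (graph_laplacian d R lam (u k) *v u k) \<noteq> 0
           then min (min (nu0 * (norm (F (u k) - v))\<^sup>2 / norm (graph_laplacian d R lam (u k) *v u k))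
                         (nu1 / norm (graph_laplacian d R lam (u k) *v u k))) nu2
           else 0)"
    and iter: "\<And>k. u (Suc k) = u k - alpha k *\<^sub>R adjoint (F' (u k)) (F (u k) - v)
                                      - beta k *\<^sub>R (graph_laplacian d R lam (u k) *v u k)"
    and zeta_le_alpha: "\<And>k. zeta \<le> alpha k"
    and ball_dom: "cball (u 0) (3 * wp) \<subseteq> Dom"
    and A1: "\<And>w. w \<in> cball (u 0) (3 * wp) \<Longrightarrow> (F has_derivative F' w) (at w within Dom)"
    and A1_cont: "continuous_on (cball (u 0) (3 * wp)) F'"
    and A2: "\<And>w. w \<in> cball (u 0) (3 * wp) \<Longrightarrow> onorm (F' w) \<le> B"
    and A3: "\<And>x w. x \<in> cball (u 0) (3 * wp) \<Longrightarrow> w \<in> cball (u 0) (3 * wp) \<Longrightarrow>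
               norm (F x - F w - F' w (x - w)) \<le> eta * norm (F x - F w)"
    and A4: "\<And>x w. x \<in> cball (u 0) (3 * wp) \<Longrightarrow> w \<in> cball (u 0) (3 * wp) \<Longrightarrow>
               onorm (\<lambda>h. F' x h - F' w h) \<le> L * norm (x - w)"
    and A5: "udag \<in> cball (u 0) wp" "F udag = v"
    and H: "H > (1 + eta) / (1 - eta)"
    and zeta_big: "zeta > (nu0 * (wp + nu1) + zeta0\<^sup>2) / (1 - eta - (1 + eta) / H)"
  shows "(\<forall>k. u k \<in> cball udag wp)
    \<and> (\<forall>k. (norm (u (Suc k) - udag))\<^sup>2 - (norm (u k - udag))\<^sup>2
            \<le> - 2 * ((1 - eta) * zeta - nu0 * (wp + nu1) - zeta0\<^sup>2) * (norm (F (u k) - v))\<^sup>2)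
    \<and> (1 - eta) * zeta - nu0 * (wp + nu1) - zeta0\<^sup>2 > 0
    \<and> decseq (\<lambda>k. norm (u k - udag))
    \<and> summable (\<lambda>k. (norm (F (u k) - v))\<^sup>2)
    \<and> (\<Sum>k. (norm (F (u k) - v))\<^sup>2)
        \<le> (norm (u 0 - udag))\<^sup>2 / (2 * ((1 - eta) * zeta - nu0 * (wp + nu1) - zeta0\<^sup>2))"
proof -
  define C0 where "C0 = (1 - eta) * zeta - nu0 * (wp + nu1) - zeta0\<^sup>2"
  have "0 \<le> nu0 * (wp + nu1) + zeta0\<^sup>2"
    using consts_pos wp_pos by simp
  from descent_constant_pos[OF eta H this zeta_big] have C0_pos: "0 < C0"
    unfolding C0_def by simp
  have descent: "(norm (u (Suc k) - udag))\<^sup>2 - (norm (u k - udag))\<^sup>2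
      \<le> - 2 * C0 * (norm (F (u k) - v))\<^sup>2" if close: "norm (u k - udag) \<le> wp" for k
  proof -
    have udag_in: "udag \<in> cball (u 0) (3 * wp)" and uk_in: "u k \<in> cball (u 0) (3 * wp)"
      using A5(1) close wp_pos dist_triangle[of "u 0" "u k" udag]
      by (auto simp: dist_norm norm_minus_commute)
    show ?thesis
      unfolding iter C0_def using consts_pos
      by (intro regularized_landweber_step_size_rule[OF has_derivative_linear[OF A1[OF uk_in]]
            A3[OF udag_in uk_in] A5(2) close eta(2) alpha_def zeta_le_alpha _ _ beta_def]) simp_all
  qed
  have start: "norm (u 0 - udag) \<le> wp"
    using A5(1) by (simp add: dist_norm norm_minus_commute)
  note fejer = fejer_descent_bounded_summable[where e = "\<lambda>k. norm (u k - udag)",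
      OF descent C0_pos norm_ge_zero start]
  have "\<forall>k. (norm (u (Suc k) - udag))\<^sup>2 - (norm (u k - udag))\<^sup>2
      \<le> - 2 * C0 * (norm (F (u k) - v))\<^sup>2"
    using descent[OF fejer(1)[rule_format]] by blast
  with fejer C0_pos show ?thesis
    unfolding C0_def by (simp add: dist_norm norm_minus_commute)
qed

end
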